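(* Let $\Gamma\le\mathrm{Iso}(\mathbb{R}^{r,s})$ be a subgroup whose centralizer in $\mathrm{Iso}(\mathbb{R}^{r,s})$ has an open orbit in $\mathbb{R}^{r,s}$, let $\Delta$ be the center of $\Gamma$, and let $U_0=U_\Gamma\cap U_\Gamma^\perp$. Then $A\cdot U_\Delta^\perp\subseteq U_0$ for every $(I+A,v)\in\Gamma$.
   Context: $\mathbb{R}^{r,s}$ denotes $\mathbb{R}^{n}$, $n=r+s$, with a nondegenerate symmetric bilinear form $\langle\cdot,\cdot\rangle$ of signature $(r,s)$; $\mathrm{Iso}(\mathbb{R}^{r,s})$ is its group of affine isometries, whose elements are written $\gamma=(I+A,v)\colon x\mapsto(I+A)x+v$. For a subset $\Lambda$ of $\Gamma$, $U_\Lambda=\sum_{(I+A,v)\in\Lambda}\operatorname{im}A$; $\perp$ denotes orthogonal complement with respect to $\langle\cdot,\cdot\rangle$. Known facts (Wolf) for such $\Gamma$: every $(I+A,v)\in\Gamma$ satisfies $A^2=0$, $Av=0$, $\langle Ax,y\rangle=-\langle x,Ay\rangle$, $\ker A=(\operatorname{im}A)^\perp$, $\operatorname{im}A$ totally isotropic; for $\gamma_i=(I+A_i,v_i)\in\Gamma$ one has $A_1A_2A_3=0$ and $[\gamma_1,\gamma_2]=(I+2A_1A_2,2A_1v_2)$. *)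

theory Defs
  imports "HOL-Analysis.Analysis"
begin

text \<open>The scalar product space: a nondegenerate symmetric bilinear form on real^'n,
  given by its Gram matrix G:  <x,y> = x \<bullet> (G *v y).\<close>

definition bform :: "real^('n::finite)^'n \<Rightarrow> real^'n \<Rightarrow> real^'n \<Rightarrow> real" where
  "bform G x y = x \<bullet> (G *v y)"

definition nondeg_sym_form :: "real^('n::finite)^'n \<Rightarrow> bool" where
  "nondeg_sym_form G \<longleftrightarrow> transpose G = G \<and> invertible G"

text \<open>An affine map x \<mapsto> M x + v is represented by the pair (M, v).\<close>

type_synonym ('n) aff = "(real^'n^'n) \<times> (real^'n)"

definition aff_apply :: "('n::finite) aff \<Rightarrow> real^'n \<Rightarrow> real^'n" where
  "aff_apply g x = fst g *v x + snd g"

definition aff_comp :: "('n::finite) aff \<Rightarrow> 'n aff \<Rightarrow> 'n aff" where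
  "aff_comp g h = (fst g ** fst h, fst g *v snd h + snd g)"

definition aff_id :: "('n::finite) aff" where
  "aff_id = (mat 1, 0)"

definition aff_inv :: "('n::finite) aff \<Rightarrow> 'n aff" where
  "aff_inv g = (matrix_inv (fst g), - (matrix_inv (fst g) *v snd g))"

definition Iso :: "real^('n::finite)^'n \<Rightarrow> 'n aff set" where
  "Iso G = {g. \<forall>x y. bform G (fst g *v x) (fst g *v y) = bform G x y}"

definition is_subgroup_Iso :: "real^('n::finite)^'n \<Rightarrow> 'n aff set \<Rightarrow> bool" where
  "is_subgroup_Iso G \<Gamma> \<longleftrightarrow> \<Gamma> \<subseteq> Iso G \<and> aff_id \<in> \<Gamma> \<and>
     (\<forall>g\<in>\<Gamma>. \<forall>h\<in>\<Gamma>. aff_comp g h \<in> \<Gamma>) \<and> (\<forall>g\<in>\<Gamma>. aff_inv g \<in> \<Gamma>)"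

definition centralizer_Iso :: "real^('n::finite)^'n \<Rightarrow> 'n aff set \<Rightarrow> 'n aff set" where
  "centralizer_Iso G \<Gamma> = {g \<in> Iso G. \<forall>h\<in>\<Gamma>. aff_comp g h = aff_comp h g}"

definition has_open_orbit :: "('n::finite) aff set \<Rightarrow> bool" where
  "has_open_orbit H \<longleftrightarrow> (\<exists>x. open ((\<lambda>g. aff_apply g x) ` H))"

definition group_center :: "('n::finite) aff set \<Rightarrow> 'n aff set" where
  "group_center \<Gamma> = {g \<in> \<Gamma>. \<forall>h\<in>\<Gamma>. aff_comp g h = aff_comp h g}"

text \<open>For \<gamma> = (I + A, v), A = M - I.\<close>

definition linA :: "('n::finite) aff \<Rightarrow> real^'n^'n" where
  "linA g = fst g - mat 1"

text \<open>U_\<Lambda> = sum over \<gamma> \<in> \<Lambda> of im A.\<close>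

definition U_of :: "('n::finite) aff set \<Rightarrow> (real^'n) set" where
  "U_of \<Lambda> = span (\<Union>g\<in>\<Lambda>. range (\<lambda>x. linA g *v x))"

definition orth :: "real^('n::finite)^'n \<Rightarrow> (real^'n) set \<Rightarrow> (real^'n) set" where
  "orth G U = {x. \<forall>u\<in>U. bform G x u = 0}"

end

theory Submission
  imports Defs
begin

text \<open>
  Fix \<open>x\<^sub>0\<close> whose orbit under the centralizer \<open>Z\<close> of \<open>\<Gamma>\<close> is open.  For
  \<open>g, h \<in> \<Gamma>\<close> the quantity \<open>\<langle>g y - y, h y - y\<rangle>\<close> is constant along this orbit, because an
  isometry commuting with \<open>g\<close> and \<open>h\<close> transports displacements.  Restricting it to short
  lines \<open>x\<^sub>0 + t u\<close> inside the orbit gives a polynomial \<open>t b + t\<^sup>2 a\<close> vanishing near 0, so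
  both coefficients vanish.  Polarizing these identities and using nondegeneracy yields
  Wolf's structure facts: \<open>A\<^sub>g\<close> is skew, \<open>A\<^sub>g A\<^sub>h = - A\<^sub>h A\<^sub>g\<close>, \<open>A\<^sub>g\<^sup>2 = 0\<close>, \<open>A\<^sub>g v\<^sub>g = 0\<close>,
  \<open>A\<^sub>g v\<^sub>h = - A\<^sub>h v\<^sub>g\<close> and \<open>A\<^sub>g A\<^sub>h A\<^sub>k = 0\<close>.  From these, the commutator \<open>[g,h]\<close> has linear
  part \<open>I + 2 A\<^sub>g A\<^sub>h\<close> and translation \<open>2 A\<^sub>g v\<^sub>h\<close>, and it is central in \<open>\<Gamma>\<close>.
  Finally, for \<open>x \<perp> U\<^sub>\<Delta>\<close>: \<open>A\<^sub>g x \<in> U\<^sub>\<Gamma>\<close> trivially, and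
  \<open>\<langle>A\<^sub>g x, A\<^sub>h w\<rangle> = - \<langle>x, A\<^sub>g A\<^sub>h w\<rangle> = 0\<close> since \<open>2 A\<^sub>g A\<^sub>h w\<close> lies in \<open>U\<^sub>\<Delta>\<close>.
\<close>

lemma bform_add_left [simp]: "bform G (x + y) z = bform G x z + bform G y z"
  by (simp add: bform_def inner_add_left)

lemma bform_add_right [simp]: "bform G z (x + y) = bform G z x + bform G z y"
  by (simp add: bform_def matrix_vector_right_distrib inner_add_right)

lemma bform_diff_left [simp]: "bform G (x - y) z = bform G x z - bform G y z"
  by (simp add: bform_def inner_diff_left)

lemma bform_diff_right [simp]: "bform G z (x - y) = bform G z x - bform G z y"
  by (simp add: bform_def matrix_vector_mult_diff_distrib inner_diff_right)

lemma bform_scaleR_left [simp]: "bform G (c *\<^sub>R x) z = c * bform G x z"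
  by (simp add: bform_def)

lemma bform_scaleR_right [simp]: "bform G z (c *\<^sub>R x) = c * bform G z x"
  by (simp add: bform_def matrix_vector_mult_scaleR)

lemma bform_minus_left [simp]: "bform G (- x) z = - bform G x z"
  using bform_scaleR_left[of G "-1" x z] by simp

lemma bform_minus_right [simp]: "bform G z (- x) = - bform G z x"
  using bform_scaleR_right[of G z "-1" x] by simp

lemma bform_zero [simp]: "bform G 0 z = 0" "bform G z 0 = 0"
  by (simp_all add: bform_def)

lemma bform_sym: "transpose G = G \<Longrightarrow> bform G x y = bform G y x"
  unfolding bform_def by (metis dot_lmul_matrix inner_commute transpose_matrix_vector)

lemma bform_eqI:
  assumes "invertible G" and "\<And>y. bform G a y = bform G b y"
  shows "a = b"
proof -
  obtain G' where "G ** G' = mat 1" using assms(1) unfolding invertible_def by blast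
  then have "bform G (a - b) (G' *v (a - b)) = (a - b) \<bullet> (a - b)"
    by (simp add: bform_def matrix_vector_mul_assoc del: bform_diff_left)
  with assms(2) show ?thesis by simp
qed

lemma orth_span: "x \<in> orth G (span S) \<longleftrightarrow> (\<forall>u\<in>S. bform G x u = 0)"
proof
  assume gen: "\<forall>u\<in>S. bform G x u = 0"
  have "bform G x u = 0" if "u \<in> span S" for u
    using that by (induction rule: span_induct_alt) (simp_all add: gen)
  then show "x \<in> orth G (span S)" by (simp add: orth_def)
qed (auto simp: orth_def span_base)

lemma matrix_vector_mult_minus: "M *v (- x) = - (M *v (x :: real^'n))"
  by (rule linear_neg[OF matrix_vector_mul_linear])

lemma linear_part_apply: "fst g *v x = x + linA g *v x"
  by (simp add: linA_def matrix_vector_mult_diff_rdistrib)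

lemma linA_aff_comp:
  "linA (aff_comp g h) *v x = linA g *v x + linA h *v x + linA g *v (linA h *v x)"
proof -
  have "linA (aff_comp g h) *v x = fst g *v (fst h *v x) - x"
    by (simp add: linA_def aff_comp_def matrix_vector_mult_diff_rdistrib matrix_vector_mul_assoc)
  then show ?thesis by (simp add: linear_part_apply matrix_vector_right_distrib)
qed

definition displacement :: "'n::finite aff \<Rightarrow> real^'n \<Rightarrow> real^'n" where
  "displacement g y = aff_apply g y - y"

lemma displacement_eq: "displacement g y = linA g *v y + snd g"
  by (simp add: displacement_def aff_apply_def linear_part_apply)

lemma displacement_commute:
  assumes "aff_comp z g = aff_comp g z"
  shows "displacement g (aff_apply z y) = fst z *v displacement g y"
proof -
  from assms have m: "fst z ** fst g = fst g ** fst z"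
    and t: "fst z *v snd g + snd z = fst g *v snd z + snd g"
    by (auto simp: aff_comp_def prod_eq_iff)
  have "displacement g (aff_apply z y)
      = (fst g ** fst z) *v y + (fst g *v snd z + snd g) - fst z *v y - snd z"
    by (simp add: displacement_def aff_apply_def matrix_vector_right_distrib matrix_vector_mul_assoc)
  also have "\<dots> = (fst z ** fst g) *v y + (fst z *v snd g + snd z) - fst z *v y - snd z"
    using m t by simp
  also have "\<dots> = fst z *v displacement g y"
    by (simp add: displacement_def aff_apply_def matrix_vector_right_distrib
        matrix_vector_mult_diff_distrib matrix_vector_mul_assoc)
  finally show ?thesis .
qed

lemma displacement_line:
  "displacement g (x + t *\<^sub>R u) = displacement g x + t *\<^sub>R (linA g *v u)"
  by (simp add: displacement_eq matrix_vector_right_distrib matrix_vector_mult_scaleR algebra_simps)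

lemma matrix_inv_eqI:
  fixes M :: "real^'n^'n"
  assumes right: "M ** X = mat 1" and left: "X ** M = mat 1"
  shows "matrix_inv M = X"
proof -
  have "M ** matrix_inv M = mat 1 \<and> matrix_inv M ** M = mat 1"
    unfolding matrix_inv_def by (rule someI[of _ X]) (use right left in blast)
  then have "matrix_inv M = matrix_inv M ** (M ** X)"
    using right by (simp add: matrix_mul_rid)
  also have "\<dots> = X"
    using \<open>M ** matrix_inv M = mat 1 \<and> matrix_inv M ** M = mat 1\<close>
    by (simp add: matrix_mul_assoc matrix_mul_lid)
  finally show ?thesis .
qed

lemma aff_inv_unipotent:
  assumes AA: "\<And>x. linA g *v (linA g *v x) = 0" and Av: "linA g *v snd g = 0"
  shows "fst (aff_inv g) *v x = x - linA g *v x" and "snd (aff_inv g) = - snd g"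
proof -
  define X where "X = mat 1 - linA g"
  have X: "X *v y = y - linA g *v y" for y
    by (simp add: X_def matrix_vector_mult_diff_rdistrib)
  have right: "fst g ** X = mat 1"
    by (simp add: matrix_eq matrix_vector_mul_assoc[symmetric] X linear_part_apply
        matrix_vector_mult_diff_distrib AA)
  have left: "X ** fst g = mat 1"
    by (simp add: matrix_eq matrix_vector_mul_assoc[symmetric] X linear_part_apply
        matrix_vector_right_distrib AA)
  have "matrix_inv (fst g) = X"
    using right left by (rule matrix_inv_eqI)
  then show "fst (aff_inv g) *v x = x - linA g *v x" and "snd (aff_inv g) = - snd g"
    by (simp_all add: aff_inv_def X Av)
qed

definition aff_commutator :: "'n::finite aff \<Rightarrow> 'n aff \<Rightarrow> 'n aff" where
  "aff_commutator g h = aff_comp (aff_comp g h) (aff_comp (aff_inv g) (aff_inv h))"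

section \<open>Displacement pairings on an open orbit\<close>

lemma quadratic_vanishing_near_zero:
  assumes "(d::real) > 0" and "\<And>t. \<bar>t\<bar> < d \<Longrightarrow> t * b + t\<^sup>2 * a = 0"
  shows "a = 0" and "b = 0"
proof -
  have "(d/2) * (b + (d/2) * a) = 0" and "(d/4) * (b + (d/4) * a) = 0"
    using assms(2)[of "d/2"] assms(2)[of "d/4"] assms(1)
    by (simp_all add: power2_eq_square algebra_simps)
  then have half: "b + (d/2) * a = 0" and quarter: "b + (d/4) * a = 0"
    using assms(1) by simp_all
  then have "(d/4) * a = 0" by linarith
  then show "a = 0" using assms(1) by simp
  with half show "b = 0" by simp
qed

lemma orbit_contains_point: "x \<in> (\<lambda>z. aff_apply z x) ` centralizer_Iso G \<Gamma>"
proof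
  show "aff_id \<in> centralizer_Iso G \<Gamma>"
    by (simp add: centralizer_Iso_def Iso_def aff_id_def aff_comp_def)
qed (simp add: aff_apply_def aff_id_def)

text \<open>The pairing of the displacements of \<open>g, h \<in> \<Gamma>\<close> is constant along orbits of the
  centralizer of \<open>\<Gamma>\<close>, because centralizing isometries transport displacements.\<close>

lemma displacement_pairing_orbit_invariant:
  assumes "z \<in> centralizer_Iso G \<Gamma>" and "g \<in> \<Gamma>" and "h \<in> \<Gamma>"
  shows "bform G (displacement g (aff_apply z y)) (displacement h (aff_apply z y))
       = bform G (displacement g y) (displacement h y)"
proof -
  from assms have "aff_comp z g = aff_comp g z" and "aff_comp z h = aff_comp h z"
    and "z \<in> Iso G" by (auto simp: centralizer_Iso_def)
  then show ?thesis by (simp add: displacement_commute Iso_def)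
qed

text \<open>Expanding that constant pairing along lines through a point with open orbit: the
  quadratic and the linear coefficient in the line parameter both vanish.\<close>

lemma displacement_pairing_open_orbit:
  assumes op: "open ((\<lambda>z. aff_apply z x) ` centralizer_Iso G \<Gamma>)"
    and g: "g \<in> \<Gamma>" and h: "h \<in> \<Gamma>"
  shows "bform G (linA g *v u) (linA h *v u) = 0"
    and "bform G (displacement g x) (linA h *v u) + bform G (linA g *v u) (displacement h x) = 0"
proof -
  let ?O = "(\<lambda>z. aff_apply z x) ` centralizer_Iso G \<Gamma>"
  obtain e where e: "e > 0" "ball x e \<subseteq> ?O"
    using op orbit_contains_point openE by metis
  have norm_pos: "norm u + 1 > 0" by (simp add: add_nonneg_pos)
  define d where "d = e / (norm u + 1)"
  have d: "d > 0" using e norm_pos by (simp add: d_def)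
  have on_orbit: "x + t *\<^sub>R u \<in> ?O" if t: "\<bar>t\<bar> < d" for t
  proof -
    have "norm (t *\<^sub>R u) \<le> \<bar>t\<bar> * (norm u + 1)" by (simp add: mult_left_mono)
    also have "\<dots> < d * (norm u + 1)" using t norm_pos by simp
    also have "\<dots> = e"
      using norm_pos by (simp add: d_def)
    finally show ?thesis using e(2) by (auto simp: dist_norm)
  qed
  have "t * (bform G (displacement g x) (linA h *v u) + bform G (linA g *v u) (displacement h x))
      + t\<^sup>2 * bform G (linA g *v u) (linA h *v u) = 0" if t: "\<bar>t\<bar> < d" for t
  proof -
    obtain z where "z \<in> centralizer_Iso G \<Gamma>" and "x + t *\<^sub>R u = aff_apply z x"
      using on_orbit[OF t] by blast
    then have "bform G (displacement g (x + t *\<^sub>R u)) (displacement h (x + t *\<^sub>R u))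
             = bform G (displacement g x) (displacement h x)"
      using displacement_pairing_orbit_invariant[OF _ g h] by simp
    then show ?thesis
      by (simp add: displacement_line power2_eq_square algebra_simps)
  qed
  from quadratic_vanishing_near_zero[OF d this]
  show "bform G (linA g *v u) (linA h *v u) = 0"
    and "bform G (displacement g x) (linA h *v u) + bform G (linA g *v u) (displacement h x) = 0"
    by simp_all
qed

section \<open>Wolf's structure facts\<close>

locale open_orbit_group =
  fixes G :: "real^'n::finite^'n" and \<Gamma> :: "'n aff set"
  assumes nondeg: "nondeg_sym_form G"
    and subgroup: "is_subgroup_Iso G \<Gamma>"
    and open_orbit: "has_open_orbit (centralizer_Iso G \<Gamma>)"
begin

lemma form_sym: "bform G x y = bform G y x"
  using nondeg by (simp add: nondeg_sym_form_def bform_sym)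

lemma eq_by_form:
  assumes "\<And>y. bform G a y = bform G b y"
  shows "a = b"
  using bform_eqI[OF _ assms] nondeg by (simp add: nondeg_sym_form_def)

lemma comp_closed: "g \<in> \<Gamma> \<Longrightarrow> h \<in> \<Gamma> \<Longrightarrow> aff_comp g h \<in> \<Gamma>"
  and inv_closed: "g \<in> \<Gamma> \<Longrightarrow> aff_inv g \<in> \<Gamma>"
  and isometry: "g \<in> \<Gamma> \<Longrightarrow> bform G (fst g *v x) (fst g *v y) = bform G x y"
  using subgroup by (auto simp: is_subgroup_Iso_def Iso_def)

text \<open>Polarized form of \<open>displacement_pairing_open_orbit\<close>, with the base point removed.\<close>

lemma linear_pairing:
  assumes "g \<in> \<Gamma>" and "h \<in> \<Gamma>"
  shows "bform G (linA g *v u) (linA h *v w) + bform G (linA g *v w) (linA h *v u) = 0"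
proof -
  obtain x where op: "open ((\<lambda>z. aff_apply z x) ` centralizer_Iso G \<Gamma>)"
    using open_orbit by (auto simp: has_open_orbit_def)
  note vanish = displacement_pairing_open_orbit(1)[OF op assms]
  show ?thesis
    using vanish[of "u + w"] vanish[of u] vanish[of w] by (simp add: matrix_vector_right_distrib)
qed

lemma translation_pairing:
  assumes "g \<in> \<Gamma>" and "h \<in> \<Gamma>"
  shows "bform G (snd g) (linA h *v u) + bform G (linA g *v u) (snd h) = 0"
proof -
  obtain x where op: "open ((\<lambda>z. aff_apply z x) ` centralizer_Iso G \<Gamma>)"
    using open_orbit by (auto simp: has_open_orbit_def)
  show ?thesis
    using displacement_pairing_open_orbit(2)[OF op assms, of u] linear_pairing[OF assms, of x u]
    by (simp add: displacement_eq)
qed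

lemma image_isotropic: "g \<in> \<Gamma> \<Longrightarrow> bform G (linA g *v x) (linA g *v y) = 0"
  using linear_pairing[of g g x y] form_sym[of "linA g *v y" "linA g *v x"] by simp

lemma skew: "g \<in> \<Gamma> \<Longrightarrow> bform G (linA g *v x) y = - bform G x (linA g *v y)"
  using isometry[of g x y] image_isotropic[of g x y] by (simp add: linear_part_apply)

lemma square_zero: "g \<in> \<Gamma> \<Longrightarrow> linA g *v (linA g *v x) = 0"
  by (rule eq_by_form) (simp add: skew[of g "linA g *v x"] image_isotropic)

lemma translation_kernel: "g \<in> \<Gamma> \<Longrightarrow> linA g *v snd g = 0"
  by (rule eq_by_form)
     (use translation_pairing[of g g] form_sym[of "snd g"] in \<open>simp add: skew\<close>)

lemma anticommute:
  "g \<in> \<Gamma> \<Longrightarrow> h \<in> \<Gamma> \<Longrightarrow> linA g *v (linA h *v x) = - (linA h *v (linA g *v x))"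
  by (rule eq_by_form)
     (use linear_pairing[of h g x] form_sym[of "linA g *v x"] in \<open>simp add: skew\<close>)

lemma translation_cross:
  "g \<in> \<Gamma> \<Longrightarrow> h \<in> \<Gamma> \<Longrightarrow> linA g *v snd h = - (linA h *v snd g)"
  by (rule eq_by_form)
     (use translation_pairing[of g h] form_sym[of "snd h"] in \<open>simp add: skew\<close>)

text \<open>\<open>A\<^sub>g A\<^sub>h A\<^sub>k = 0\<close>: apply anticommutation to \<open>gh\<close> and \<open>k\<close>.\<close>

lemma triple_zero:
  assumes g: "g \<in> \<Gamma>" and h: "h \<in> \<Gamma>" and k: "k \<in> \<Gamma>"
  shows "linA g *v (linA h *v (linA k *v x)) = 0"
proof -
  have "linA (aff_comp g h) *v (linA k *v x) = - (linA k *v (linA (aff_comp g h) *v x))"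
    by (rule anticommute[OF comp_closed[OF g h] k])
  then have "linA g *v (linA h *v (linA k *v x)) = - (linA k *v (linA g *v (linA h *v x)))"
    using anticommute[OF g k, of x] anticommute[OF h k, of x]
    by (simp add: linA_aff_comp matrix_vector_right_distrib matrix_vector_mult_minus algebra_simps)
  also have "\<dots> = - (linA g *v (linA h *v (linA k *v x)))"
    using anticommute[OF k g, of "linA h *v x"] anticommute[OF h k, of x]
    by (simp add: matrix_vector_mult_minus)
  finally show ?thesis by (simp add: vec_eq_iff)
qed

section \<open>Commutators are central\<close>

lemma inverse_linear: "g \<in> \<Gamma> \<Longrightarrow> fst (aff_inv g) *v x = x - linA g *v x"
  and inverse_translation: "g \<in> \<Gamma> \<Longrightarrow> snd (aff_inv g) = - snd g"
  by (simp_all add: aff_inv_unipotent square_zero translation_kernel)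

lemma commutator_linear:
  assumes g: "g \<in> \<Gamma>" and h: "h \<in> \<Gamma>"
  shows "fst (aff_commutator g h) *v x = x + 2 *\<^sub>R (linA g *v (linA h *v x))"
proof -
  note rules = square_zero[OF g] square_zero[OF h] anticommute[OF h g]
  have "fst (aff_commutator g h) *v x
      = fst g *v (fst h *v (fst (aff_inv g) *v (fst (aff_inv h) *v x)))"
    by (simp add: aff_commutator_def aff_comp_def matrix_vector_mul_assoc[symmetric])
  also have "fst (aff_inv g) *v (fst (aff_inv h) *v x)
      = x - linA h *v x - linA g *v x + linA g *v (linA h *v x)"
    by (simp add: inverse_linear g h matrix_vector_mult_diff_distrib)
  also have "fst h *v \<dots> = x - linA g *v x + 2 *\<^sub>R (linA g *v (linA h *v x))"
    by (simp add: linear_part_apply[of h] rules matrix_vector_right_distrib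
        matrix_vector_mult_diff_distrib scaleR_2 matrix_vector_mult_minus)
  also have "fst g *v \<dots> = x + 2 *\<^sub>R (linA g *v (linA h *v x))"
    by (simp add: linear_part_apply[of g] rules matrix_vector_right_distrib
        matrix_vector_mult_diff_distrib matrix_vector_mult_scaleR)
  finally show ?thesis .
qed

lemma commutator_translation:
  assumes g: "g \<in> \<Gamma>" and h: "h \<in> \<Gamma>"
  shows "snd (aff_commutator g h) = 2 *\<^sub>R (linA g *v snd h)"
proof -
  note rules = square_zero[OF g] translation_kernel[OF g] translation_kernel[OF h]
    anticommute[OF h g] translation_cross[OF h g]
  define w where "w = - snd h + linA g *v snd h - snd g"
  have "snd (aff_commutator g h)
      = fst g *v (fst h *v (fst (aff_inv g) *v snd (aff_inv h) + snd (aff_inv g)))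
        + (fst g *v snd h + snd g)"
    by (simp add: aff_commutator_def aff_comp_def matrix_vector_mul_assoc[symmetric])
  also have "fst (aff_inv g) *v snd (aff_inv h) + snd (aff_inv g) = w"
    by (simp add: w_def inverse_linear g inverse_translation g h matrix_vector_mult_minus)
  also have "fst h *v w = w + linA g *v snd h"
    by (simp add: w_def linear_part_apply[of h] rules matrix_vector_right_distrib
        matrix_vector_mult_diff_distrib matrix_vector_mult_minus)
  also have "fst g *v (w + linA g *v snd h) = w"
  proof -
    have "linA g *v w = - (linA g *v snd h)"
      by (simp add: w_def rules matrix_vector_right_distrib
          matrix_vector_mult_diff_distrib matrix_vector_mult_minus)
    then show ?thesis
      by (simp add: linear_part_apply[of g] rules matrix_vector_right_distrib)
  qed
  also have "w + (fst g *v snd h + snd g) = 2 *\<^sub>R (linA g *v snd h)"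
    by (simp add: w_def linear_part_apply scaleR_2)
  finally show ?thesis .
qed

lemma commutator_linA:
  "g \<in> \<Gamma> \<Longrightarrow> h \<in> \<Gamma> \<Longrightarrow> linA (aff_commutator g h) *v x = 2 *\<^sub>R (linA g *v (linA h *v x))"
  using commutator_linear[of g h x] by (simp add: linA_def matrix_vector_mult_diff_rdistrib)

text \<open>Since all triple products \<open>A A A\<close> vanish, \<open>[g, h]\<close> commutes with every \<open>k \<in> \<Gamma>\<close>.\<close>

lemma commutator_central:
  assumes g: "g \<in> \<Gamma>" and h: "h \<in> \<Gamma>"
  shows "aff_commutator g h \<in> group_center \<Gamma>"
proof -
  let ?c = "aff_commutator g h"
  have "?c \<in> \<Gamma>"
    unfolding aff_commutator_def using g h by (intro comp_closed inv_closed)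
  moreover have "aff_comp ?c k = aff_comp k ?c" if k: "k \<in> \<Gamma>" for k
  proof -
    have "fst ?c ** fst k = fst k ** fst ?c"
      by (simp add: matrix_eq matrix_vector_mul_assoc[symmetric] commutator_linear g h
          linear_part_apply[of k] triple_zero g h k
          matrix_vector_right_distrib matrix_vector_mult_scaleR algebra_simps)
    moreover have "fst ?c *v snd k + snd ?c = fst k *v snd ?c + snd k"
    proof -
      have "linA g *v (linA h *v snd k) = linA k *v (linA g *v snd h)"
        using translation_cross[OF h k] anticommute[OF g k, of "snd h"]
        by (simp add: matrix_vector_mult_minus)
      then show ?thesis
        by (simp add: commutator_linear g h commutator_translation g h linear_part_apply[of k]
            matrix_vector_right_distrib matrix_vector_mult_scaleR scaleR_add_right)
    qed
    ultimately show ?thesis by (simp add: aff_comp_def)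
  qed
  ultimately show ?thesis by (simp add: group_center_def)
qed

end

theorem lemma4p2:
  fixes G :: "real^'n^'n" and \<Gamma> :: "'n aff set"
  assumes "nondeg_sym_form G"
    and "is_subgroup_Iso G \<Gamma>"
    and "has_open_orbit (centralizer_Iso G \<Gamma>)"
  shows "\<forall>g\<in>\<Gamma>. (\<lambda>x. linA g *v x) ` orth G (U_of (group_center \<Gamma>))
           \<subseteq> U_of \<Gamma> \<inter> orth G (U_of \<Gamma>)"
proof (intro ballI subsetI, elim imageE)
  interpret open_orbit_group G \<Gamma> using assms by unfold_locales
  fix g y x
  assume g: "g \<in> \<Gamma>" and x: "x \<in> orth G (U_of (group_center \<Gamma>))" and y: "y = linA g *v x"
  have "y \<in> U_of \<Gamma>"
    unfolding y U_of_def using g by (intro span_base) blast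
  moreover have "bform G y (linA h *v w) = 0" if h: "h \<in> \<Gamma>" for h w
  proof -
    have "linA (aff_commutator g h) *v w \<in> U_of (group_center \<Gamma>)"
      unfolding U_of_def using commutator_central[OF g h] by (intro span_base) blast
    then have "bform G x (linA g *v (linA h *v w)) = 0"
      using x by (auto simp: orth_def commutator_linA[OF g h] simp del: scaleR_2)
    then show ?thesis by (simp add: y skew[OF g])
  qed
  then have "y \<in> orth G (U_of \<Gamma>)"
    unfolding U_of_def orth_span by blast
  ultimately show "y \<in> U_of \<Gamma> \<inter> orth G (U_of \<Gamma>)" by blast
qed

end
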